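(* Let $C$ be a commutative ring and let $f(x_1,\dots,x_n,y_1,\dots,y_n,\vec t)$ be a polynomial in the free associative $C$-algebra on noncommuting indeterminates $x_i,y_i,t_j$ which is doubly alternating. Then $$f(x_1,\dots,x_n,y_1,\dots,y_n,\vec t)\equiv f(y_1,\dots,y_n,x_1,\dots,x_n,\vec t)\pmod{\mathcal{CAP}_{n+1}}.$$
   Context: Doubly alternating: multilinear in all $x_i,y_j$, alternating in $x_1,\dots,x_n$ and alternating in $y_1,\dots,y_n$ (interchanging two $x$'s, or two $y$'s, negates $f$). $\mathcal{CAP}_{n+1}$ is the T-ideal of the free algebra (smallest ideal stable under all substitutions) generated by $\mathrm{Cap}_{n+1}(x_1,\dots,x_{n+1};y_1,\dots,y_{n+1})=\sum_{\pi\in S_{n+1}}\operatorname{sgn}(\pi)x_{\pi(1)}y_1\cdots x_{\pi(n+1)}y_{n+1}$. *)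

theory Defs
  imports "HOL-Library.Poly_Mapping" "HOL-Combinatorics.Permutations"
begin

text \<open>Free associative algebra over a commutative ring 'c on countably many
noncommuting indeterminates (indexed by nat): finitely supported maps from
words (lists of indeterminates) to coefficients.\<close>

type_synonym 'c fpoly = "nat list \<Rightarrow>\<^sub>0 'c"

definition fconst :: "'c::comm_ring_1 \<Rightarrow> 'c fpoly" where
  "fconst c = Poly_Mapping.single [] c"

definition fvar :: "nat \<Rightarrow> 'c::comm_ring_1 fpoly" where
  "fvar i = Poly_Mapping.single [i] 1"

definition fmul :: "'c::comm_ring_1 fpoly \<Rightarrow> 'c fpoly \<Rightarrow> 'c fpoly" where
  "fmul p q = (\<Sum>u\<in>Poly_Mapping.keys p. \<Sum>v\<in>Poly_Mapping.keys q.
      Poly_Mapping.single (u @ v) (Poly_Mapping.lookup p u * Poly_Mapping.lookup q v))"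

definition fprod_list :: "'c::comm_ring_1 fpoly list \<Rightarrow> 'c fpoly" where
  "fprod_list ps = foldr fmul ps (fconst 1)"

definition fsubst :: "(nat \<Rightarrow> 'c::comm_ring_1 fpoly) \<Rightarrow> 'c fpoly \<Rightarrow> 'c fpoly" where
  "fsubst \<sigma> p = (\<Sum>w\<in>Poly_Mapping.keys p. fmul (fconst (Poly_Mapping.lookup p w)) (fprod_list (map \<sigma> w)))"

definition frename :: "(nat \<Rightarrow> nat) \<Rightarrow> 'c::comm_ring_1 fpoly \<Rightarrow> 'c fpoly" where
  "frename \<rho> p = fsubst (\<lambda>i. fvar (\<rho> i)) p"

definition vswap :: "nat \<Rightarrow> nat \<Rightarrow> nat \<Rightarrow> nat" where
  "vswap a b v = (if v = a then b else if v = b then a else v)"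

definition multilinear_in :: "nat list \<Rightarrow> 'c::comm_ring_1 fpoly \<Rightarrow> bool" where
  "multilinear_in vs f \<longleftrightarrow> (\<forall>w\<in>Poly_Mapping.keys f. \<forall>v\<in>set vs. count_list w v = 1)"

definition alternating_in :: "nat list \<Rightarrow> 'c::comm_ring_1 fpoly \<Rightarrow> bool" where
  "alternating_in vs f \<longleftrightarrow> (\<forall>i j. i < length vs \<longrightarrow> j < length vs \<longrightarrow> i \<noteq> j \<longrightarrow>
      frename (vswap (vs ! i) (vs ! j)) f = - f)"

definition doubly_alternating :: "nat list \<Rightarrow> nat list \<Rightarrow> 'c::comm_ring_1 fpoly \<Rightarrow> bool" where
  "doubly_alternating xs ys f \<longleftrightarrow>
     multilinear_in (xs @ ys) f \<and> alternating_in xs f \<and> alternating_in ys f"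

definition swap_xy :: "nat list \<Rightarrow> nat list \<Rightarrow> nat \<Rightarrow> nat" where
  "swap_xy xs ys v = (case map_of (zip xs ys @ zip ys xs) v of Some u \<Rightarrow> u | None \<Rightarrow> v)"

inductive_set Tideal :: "'c::comm_ring_1 fpoly set \<Rightarrow> 'c fpoly set" for S where
  gen: "s \<in> S \<Longrightarrow> s \<in> Tideal S"
| zero: "0 \<in> Tideal S"
| add: "a \<in> Tideal S \<Longrightarrow> b \<in> Tideal S \<Longrightarrow> a + b \<in> Tideal S"
| lmul: "a \<in> Tideal S \<Longrightarrow> fmul p a \<in> Tideal S"
| rmul: "a \<in> Tideal S \<Longrightarrow> fmul a p \<in> Tideal S"
| subst: "a \<in> Tideal S \<Longrightarrow> fsubst \<sigma> a \<in> Tideal S"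

text \<open>Capelli polynomial Cap_m with x_i = indeterminate i (i < m) and
y_i = indeterminate (m + i) (i < m):
sum over pi of sgn(pi) x_{pi(0)} y_0 x_{pi(1)} y_1 ... x_{pi(m-1)} y_{m-1}.\<close>
definition Cap :: "nat \<Rightarrow> 'c::comm_ring_1 fpoly" where
  "Cap m = (\<Sum>\<pi>\<in>{\<pi>. \<pi> permutes {..<m}}.
      fmul (fconst (of_int (sign \<pi>)))
        (fprod_list (concat (map (\<lambda>i. [fvar (\<pi> i), fvar (m + i)]) [0..<m]))))"

definition CAP :: "nat \<Rightarrow> 'c::comm_ring_1 fpoly set" where
  "CAP m = Tideal {Cap m}"

end

theory Submission
  imports Defs
begin

text \<open>A polynomial \<open>g\<close> that is multilinear and alternating in \<open>m\<close> variables lies in the T-ideal of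
  \<open>Cap\<^sub>m\<close>: for a word \<open>w\<close> of \<open>g\<close>, substituting into \<open>Cap\<^sub>m\<close> the \<open>m\<close> variables in their order of
  occurrence in \<open>w\<close> for the \<open>x\<close>'s and the subwords between them for the \<open>y\<close>'s gives a polynomial that
  contains \<open>w\<close> and is alternating in the same variables; subtracting the right multiple of it removes
  the whole orbit of \<open>w\<close>, and induction on the size of the support concludes.

  For \<open>T \<subseteq> Y\<close>, alternating \<open>f\<close> over \<open>X \<union> T\<close> (summing the signed copies of \<open>f\<close> in which \<open>X\<close> is moved
  onto some \<open>|X|\<close>-subset of \<open>X \<union> T\<close>) yields a polynomial alternating in \<open>|X| + |T|\<close> variables, hence in
  \<open>CAP\<^sub>n\<^sub>+\<^sub>1\<close> if \<open>T \<noteq> {}\<close>, and equal to \<open>f\<close> if \<open>T = {}\<close>. Inclusion--exclusion over \<open>T \<subseteq> Y\<close> isolates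
  the single copy in which \<open>X\<close> is moved onto \<open>Y\<close>, i.e.\ \<open>f\<close> with the \<open>x\<close>'s and \<open>y\<close>'s interchanged.\<close>

abbreviation coeff :: "'c::comm_ring_1 fpoly \<Rightarrow> nat list \<Rightarrow> 'c" where
  "coeff \<equiv> Poly_Mapping.lookup"

abbreviation support :: "'c::comm_ring_1 fpoly \<Rightarrow> nat list set" where
  "support \<equiv> Poly_Mapping.keys"

lemma coeff_fmul_single:
  "coeff (fmul (Poly_Mapping.single u a) p) v =
     (if take (length u) v = u then a * coeff p (drop (length u) v) else 0)"
proof (cases "a = 0")
  case True
  then show ?thesis by (simp add: fmul_def)
next
  case False
  have "coeff (fmul (Poly_Mapping.single u a) p) v = (\<Sum>y\<in>support p. (a * coeff p y when u @ y = v))"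
    using False by (simp add: fmul_def lookup_sum lookup_single)
  also have "\<dots> = (if take (length u) v = u then a * coeff p (drop (length u) v) else 0)"
  proof (cases "take (length u) v = u")
    case True
    then have "u @ y = v \<longleftrightarrow> y = drop (length u) v" for y
      by (metis append_eq_conv_conj)
    then show ?thesis
      using True by (cases "drop (length u) v \<in> support p") (auto simp: when_def in_keys_iff)
  next
    case False
    then show ?thesis by (auto simp: when_def intro!: sum.neutral)
  qed
  finally show ?thesis .
qed

lemma coeff_fmul_fconst: "coeff (fmul (fconst c) p) v = c * coeff p v"
  by (simp add: fconst_def coeff_fmul_single)

lemma fmul_single_single:
  "fmul (Poly_Mapping.single u a) (Poly_Mapping.single w b) = Poly_Mapping.single (u @ w) (a * b)"
  by (rule poly_mapping_eqI)
    (auto simp: coeff_fmul_single lookup_single when_def append_eq_conv_conj)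

lemma fprod_list_singles:
  "fprod_list (map (\<lambda>i. Poly_Mapping.single (g i) 1) ws) = Poly_Mapping.single (concat (map g ws)) 1"
  by (induction ws) (simp_all add: fprod_list_def fconst_def fmul_single_single)

lemma coeff_fsubst:
  "coeff (fsubst \<sigma> p) v = (\<Sum>w\<in>support p. coeff p w * coeff (fprod_list (map \<sigma> w)) v)"
  by (simp add: fsubst_def lookup_sum coeff_fmul_fconst)

lemma sum_coeff_sum_single:
  fixes s :: "'i \<Rightarrow> 'c::comm_ring_1" and W :: "'i \<Rightarrow> nat list"
  assumes "finite I"
  defines "p \<equiv> \<Sum>i\<in>I. Poly_Mapping.single (W i) (s i)"
  shows "(\<Sum>k\<in>support p. coeff p k * h k) = (\<Sum>i\<in>I. s i * h (W i))"
proof -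
  let ?K = "support p \<union> W ` I"
  have "(\<Sum>k\<in>support p. coeff p k * h k) = (\<Sum>k\<in>?K. coeff p k * h k)"
    by (rule sum.mono_neutral_left) (use assms in \<open>auto simp: in_keys_iff\<close>)
  also have "\<dots> = (\<Sum>k\<in>?K. \<Sum>i\<in>I. (s i * h k when W i = k))"
    by (intro sum.cong refl)
      (auto simp: p_def lookup_sum lookup_single sum_distrib_right when_def intro!: sum.cong)
  also have "\<dots> = (\<Sum>i\<in>I. \<Sum>k\<in>?K. (s i * h k when W i = k))"
    by (rule sum.swap)
  also have "\<dots> = (\<Sum>i\<in>I. s i * h (W i))"
    using assms by (intro sum.cong refl) (simp add: when_def sum.delta)
  finally show ?thesis .
qed

lemma fprod_list_map_fvar: "fprod_list (map fvar w) = Poly_Mapping.single w 1"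
  using fprod_list_singles[of "\<lambda>i. [i]" w] by (simp add: fvar_def[abs_def])

lemma coeff_frename_involution:
  fixes p :: "'c::comm_ring_1 fpoly"
  assumes "\<And>x. \<rho> (\<rho> x) = x"
  shows "coeff (frename \<rho> p) v = coeff p (map \<rho> v)"
proof -
  have "map \<rho> w = v \<longleftrightarrow> w = map \<rho> v" for w
    using assms by (auto simp: comp_def map_idI)
  then have "coeff p w * coeff (fprod_list (map (\<lambda>i. fvar (\<rho> i)) w)) v =
      (if w = map \<rho> v then coeff p w else 0)" for w
    by (simp add: fprod_list_map_fvar[of "map \<rho> w", unfolded map_map comp_def] lookup_single when_def)
  then show ?thesis
    by (simp add: frename_def coeff_fsubst in_keys_iff)
qed

lemma Cap_eq_sum_single:
  "Cap m = (\<Sum>\<pi>\<in>{\<pi>. \<pi> permutes {..<m}}.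
      Poly_Mapping.single (concat (map (\<lambda>i. [\<pi> i, m + i]) [0..<m])) (of_int (sign \<pi>)))"
proof -
  have "fprod_list (concat (map (\<lambda>i. [fvar (\<pi> i), fvar (m + i)]) [0..<m])) =
      Poly_Mapping.single (concat (map (\<lambda>i. [\<pi> i, m + i]) [0..<m])) (1::'a::comm_ring_1)" for \<pi>
    using fprod_list_map_fvar[of "concat (map (\<lambda>i. [\<pi> i, m + i]) [0..<m])"] by (simp add: map_concat comp_def)
  then show ?thesis
    by (simp add: Cap_def fconst_def fmul_single_single)
qed

lemma Tideal_sum: "finite I \<Longrightarrow> (\<And>i. i \<in> I \<Longrightarrow> a i \<in> Tideal S) \<Longrightarrow> sum a I \<in> Tideal S"
  by (induction I rule: finite_induct) (auto intro: Tideal.zero Tideal.add)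


definition alternating_on :: "nat set \<Rightarrow> (nat list \<Rightarrow> 'a::ring_1) \<Rightarrow> bool" where
  "alternating_on A c \<longleftrightarrow>
     (\<forall>a\<in>A. \<forall>b\<in>A. a \<noteq> b \<longrightarrow> (\<forall>v. c (map (Transposition.transpose a b) v) = - c v))"

definition multilinear_on :: "nat set \<Rightarrow> 'c::comm_ring_1 fpoly \<Rightarrow> bool" where
  "multilinear_on A p \<longleftrightarrow> (\<forall>v\<in>support p. \<forall>z\<in>A. count_list v z = 1)"

lemma alternating_on_subset: "alternating_on A c \<Longrightarrow> B \<subseteq> A \<Longrightarrow> alternating_on B c"
  by (auto simp: alternating_on_def)

lemma multilinear_on_subset: "multilinear_on A p \<Longrightarrow> B \<subseteq> A \<Longrightarrow> multilinear_on B p"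
  by (auto simp: multilinear_on_def)

lemma alternating_on_permutes:
  assumes "alternating_on A c" "finite A" "p permutes A"
  shows "c (map p v) = of_int (sign p) * c v"
  using assms(3,2)
proof (induction arbitrary: v rule: permutes_induct)
  case id
  then show ?case by simp
next
  case (swap a b p)
  have "sign (Transposition.transpose a b \<circ> p) = - sign p"
    using swap permutes_imp_permutation[OF \<open>finite A\<close>]
    by (simp add: sign_compose permutation_swap_id sign_swap_id)
  moreover have "c (map (Transposition.transpose a b \<circ> p) v) = - c (map p v)"
    using assms(1) swap(1-3) unfolding alternating_on_def by (metis map_map)
  ultimately show ?case
    using swap.IH by (metis mult_minus_left of_int_minus)
qed

lemma distinct_filter_count_list:
  "(\<And>x. P x \<Longrightarrow> count_list xs x \<le> 1) \<Longrightarrow> distinct (filter P xs)"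
proof (induction xs)
  case (Cons a xs)
  have "count_list xs x \<le> count_list (a # xs) x" for x
    by simp
  then have "distinct (filter P xs)"
    by (meson Cons.IH Cons.prems order_trans)
  moreover have "a \<notin> set xs" if "P a"
    using Cons.prems[OF that] by (simp add: count_list_0_iff)
  ultimately show ?case by simp
qed simp

section \<open>Interleaved words and instances of the Capelli polynomial\<close>

text \<open>\<open>interleave F us \<pi> = F\<^bsub>\<pi> 0\<^esub> u\<^sub>0 F\<^bsub>\<pi> 1\<^esub> u\<^sub>1 \<dots>\<close> is the image of the monomial of
  \<open>Cap\<close> indexed by \<open>\<pi>\<close> under the substitution \<open>x\<^sub>i \<mapsto> F\<^sub>i, y\<^sub>i \<mapsto> u\<^sub>i\<close>.\<close>
definition interleave :: "nat list \<Rightarrow> nat list list \<Rightarrow> (nat \<Rightarrow> nat) \<Rightarrow> nat list" where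
  "interleave F us \<pi> = concat (map (\<lambda>i. F ! \<pi> i # us ! i) [0..<length F])"

lemma interleave_Cons_id:
  "length us = length F \<Longrightarrow> interleave (a # F) (u # us) id = a # u @ interleave F us id"
  by (simp add: interleave_def upt_conv_Cons comp_def map_Suc_upt[symmetric] del: upt_Suc)

lemma word_decomposition:
  "\<exists>w0 us. length us = length (filter P w) \<and> w = w0 @ interleave (filter P w) us id \<and>
     (\<forall>x\<in>set w0. \<not> P x) \<and> (\<forall>u\<in>set us. \<forall>x\<in>set u. \<not> P x)"
proof (induction w)
  case Nil
  show ?case by (intro exI[of _ "[]"]) (simp add: interleave_def)
next
  case (Cons a w)
  then obtain w0 us where IH: "length us = length (filter P w)" "w = w0 @ interleave (filter P w) us id"
    "\<forall>x\<in>set w0. \<not> P x" "\<forall>u\<in>set us. \<forall>x\<in>set u. \<not> P x"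
    by blast
  show ?case
  proof (cases "P a")
    case True
    then have split: "interleave (filter P (a # w)) (w0 # us) id = a # w"
      using IH(1) by (simp add: interleave_Cons_id flip: IH(2))
    show ?thesis
      by (rule exI[of _ "[]"], rule exI[of _ "w0 # us"]) (use True IH(1,3,4) split in \<open>simp add: id_def\<close>)
  next
    case False
    show ?thesis
      by (rule exI[of _ "a # w0"], rule exI[of _ us]) (use False IH in \<open>simp add: id_def\<close>)
  qed
qed

locale interleaving =
  fixes w0 F :: "nat list" and us :: "nat list list"
  assumes distinct_F: "distinct F" and length_us: "length us = length F"
    and w0_free: "set w0 \<inter> set F = {}" and us_free: "\<forall>u\<in>set us. set u \<inter> set F = {}"
begin

definition word :: "(nat \<Rightarrow> nat) \<Rightarrow> nat list" where
  "word \<pi> = w0 @ interleave F us \<pi>"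

abbreviation perms :: "(nat \<Rightarrow> nat) set" where
  "perms \<equiv> {\<pi>. \<pi> permutes {..<length F}}"

lemma permutes_less: "\<pi> permutes {..<length F} \<Longrightarrow> k < length F \<Longrightarrow> \<pi> k < length F"
  using permutes_in_image by fastforce

lemma map_transpose_word:
  assumes "i < length F" "j < length F" "\<pi> permutes {..<length F}"
  shows "map (Transposition.transpose (F ! i) (F ! j)) (word \<pi>) = word (Transposition.transpose i j \<circ> \<pi>)"
proof -
  let ?t = "Transposition.transpose (F ! i) (F ! j)"
  have fixed: "map ?t u = u" if "set u \<inter> set F = {}" for u
    using that assms(1,2) nth_mem by (intro map_idI) (fastforce simp: Transposition.transpose_def)
  have "map (\<lambda>k. map ?t (F ! \<pi> k # us ! k)) [0..<length F] =
      map (\<lambda>k. F ! Transposition.transpose i j (\<pi> k) # us ! k) [0..<length F]"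
  proof (rule map_cong)
    fix k assume "k \<in> set [0..<length F]"
    then have k: "k < length F" by simp
    then have "?t (F ! \<pi> k) = F ! Transposition.transpose i j (\<pi> k)"
      using distinct_F assms permutes_less[OF assms(3) k]
      by (simp add: Transposition.transpose_def nth_eq_iff_index_eq)
    moreover have "map ?t (us ! k) = us ! k"
      using fixed us_free length_us k by (simp add: nth_mem)
    ultimately show "map ?t (F ! \<pi> k # us ! k) = F ! Transposition.transpose i j (\<pi> k) # us ! k"
      by simp
  qed simp
  then show ?thesis
    by (simp only: word_def interleave_def map_append map_concat map_map comp_def fixed[OF w0_free])
qed

lemma filter_word:
  assumes "\<pi> permutes {..<length F}"
  shows "filter (\<lambda>x. x \<in> set F) (word \<pi>) = map (\<lambda>k. F ! \<pi> k) [0..<length F]"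
proof -
  have blocks: "map (\<lambda>k. filter (\<lambda>x. x \<in> set F) (F ! \<pi> k # us ! k)) [0..<length F] =
      map (\<lambda>k. [F ! \<pi> k]) [0..<length F]"
  proof (rule map_cong)
    fix k assume "k \<in> set [0..<length F]"
    then show "filter (\<lambda>x. x \<in> set F) (F ! \<pi> k # us ! k) = [F ! \<pi> k]"
      using us_free length_us permutes_less[OF assms]
      by (auto simp: filter_empty_conv dest: nth_mem)
  qed simp
  moreover have "filter (\<lambda>x. x \<in> set F) w0 = []"
    using w0_free by (auto simp: filter_empty_conv)
  ultimately show ?thesis
    by (simp only: word_def interleave_def filter_append filter_concat map_map comp_def
        append_Nil concat_map_singleton)
qed

lemma word_inj:
  assumes "\<pi> permutes {..<length F}" "\<pi>' permutes {..<length F}" "word \<pi> = word \<pi>'"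
  shows "\<pi> = \<pi>'"
proof
  fix k
  show "\<pi> k = \<pi>' k"
  proof (cases "k < length F")
    case True
    have "map (\<lambda>k. F ! \<pi> k) [0..<length F] = map (\<lambda>k. F ! \<pi>' k) [0..<length F]"
      using filter_word[OF assms(1)] filter_word[OF assms(2)] assms(3) by simp
    then have "F ! \<pi> k = F ! \<pi>' k"
      using True by simp
    then show ?thesis
      using distinct_F True permutes_less[OF assms(1)] permutes_less[OF assms(2)]
      by (simp add: nth_eq_iff_index_eq)
  next
    case False
    then show ?thesis using assms(1,2) by (simp add: permutes_not_in)
  qed
qed

lemma alternating_on_word:
  assumes "alternating_on (set F) c" "\<pi> permutes {..<length F}"
  shows "c (word \<pi>) = of_int (sign \<pi>) * c (word id)"
  using assms(2) finite_lessThan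
proof (induction rule: permutes_induct)
  case id
  then show ?case by simp
next
  case (swap i j p)
  have "sign (Transposition.transpose i j \<circ> p) = - sign p"
    using swap permutes_imp_permutation[OF finite_lessThan]
    by (simp add: sign_compose permutation_swap_id sign_swap_id)
  moreover have "F ! i \<noteq> F ! j"
    using swap(1-3) distinct_F by (simp add: nth_eq_iff_index_eq)
  then have "c (word (Transposition.transpose i j \<circ> p)) = - c (word p)"
    using assms(1) swap by (simp add: alternating_on_def flip: map_transpose_word)
  ultimately show ?case
    using swap.IH by (metis mult_minus_left of_int_minus)
qed

definition cap_instance :: "'a::comm_ring_1 fpoly" where
  "cap_instance = fmul (Poly_Mapping.single w0 1)
     (fsubst (\<lambda>j. Poly_Mapping.single (if j < length F then [F ! j] else us ! (j - length F)) 1)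
       (Cap (length F)))"

lemma cap_instance_in_Tideal: "cap_instance \<in> Tideal {Cap (length F)}"
  unfolding cap_instance_def by (intro Tideal.lmul Tideal.subst Tideal.gen) simp

lemma coeff_cap_instance:
  "coeff cap_instance v = (\<Sum>\<pi>\<in>perms. of_int (sign \<pi>) * (1 when v = word \<pi>))"
proof -
  define g where "g j = (if j < length F then [F ! j] else us ! (j - length F))" for j
  define \<sigma> :: "nat \<Rightarrow> 'a fpoly" where "\<sigma> j = Poly_Mapping.single (g j) 1" for j
  have concat_pairs: "concat (map g (concat (map (\<lambda>i. [a i, b i]) xs))) = concat (map (\<lambda>i. g (a i) @ g (b i)) xs)"
    for a b :: "nat \<Rightarrow> nat" and xs
    by (induction xs) auto
  have image_monomial: "fprod_list (map \<sigma> (concat (map (\<lambda>i. [\<pi> i, length F + i]) [0..<length F]))) =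
      Poly_Mapping.single (interleave F us \<pi>) 1" if "\<pi> \<in> perms" for \<pi>
    using permutes_less[of \<pi>] that
    unfolding \<sigma>_def[abs_def] fprod_list_singles concat_pairs interleave_def
    by (intro arg_cong[where f = "\<lambda>w. Poly_Mapping.single w 1"] arg_cong[where f = concat] map_cong)
      (auto simp: g_def)
  have "coeff (fsubst \<sigma> (Cap (length F))) u =
      (\<Sum>\<pi>\<in>perms. of_int (sign \<pi>) * (1 when interleave F us \<pi> = u))" for u
    unfolding coeff_fsubst Cap_eq_sum_single sum_coeff_sum_single[OF finite_permutations[OF finite_lessThan]]
    by (intro sum.cong refl) (simp only: mem_Collect_eq image_monomial lookup_single)
  moreover have "v = w0 @ x \<longleftrightarrow> take (length w0) v = w0 \<and> x = drop (length w0) v" for x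
    by (metis append_eq_conv_conj)
  ultimately show ?thesis
    by (auto simp: cap_instance_def \<sigma>_def[abs_def] g_def coeff_fmul_single word_def when_def
        intro!: sum.neutral)
qed

lemma coeff_cap_instance_word:
  assumes "\<pi> permutes {..<length F}"
  shows "coeff cap_instance (word \<pi>) = of_int (sign \<pi>)"
proof -
  have "word \<pi> = word \<pi>' \<longleftrightarrow> \<pi>' = \<pi>" if "\<pi>' \<in> perms" for \<pi>'
    using word_inj[OF assms] that by auto
  then have "coeff cap_instance (word \<pi>) = (\<Sum>\<pi>'\<in>perms. if \<pi>' = \<pi> then of_int (sign \<pi>') else 0)"
    by (auto simp: coeff_cap_instance when_def intro!: sum.cong)
  then show ?thesis
    using assms by (simp add: finite_permutations)
qed

lemma coeff_cap_instance_eq_0: "v \<notin> word ` perms \<Longrightarrow> coeff cap_instance v = 0"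
  by (auto simp: coeff_cap_instance when_def intro!: sum.neutral)

lemma alternating_on_cap_instance: "alternating_on (set F) (coeff cap_instance)"
  unfolding alternating_on_def
proof (intro ballI impI allI)
  fix a b v assume "a \<in> set F" "b \<in> set F" "a \<noteq> b"
  then obtain i j where ij: "i < length F" "j < length F" "i \<noteq> j" "a = F ! i" "b = F ! j"
    by (metis in_set_conv_nth)
  let ?t = "Transposition.transpose a b" and ?\<tau> = "Transposition.transpose i j"
  have \<tau>_perms: "?\<tau> \<circ> \<pi> \<in> perms" if "\<pi> \<in> perms" for \<pi>
    using that ij by (auto intro: permutes_compose permutes_swap_id)
  have sign_\<tau>: "sign (?\<tau> \<circ> \<pi>) = - sign \<pi>" if "\<pi> \<in> perms" for \<pi>
    using that ij permutes_imp_permutation[OF finite_lessThan]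
    by (simp add: sign_compose permutation_swap_id sign_swap_id)
  have map_t: "map ?t (word \<pi>) = word (?\<tau> \<circ> \<pi>)" if "\<pi> \<in> perms" for \<pi>
    using map_transpose_word ij that by simp
  show "coeff cap_instance (map ?t v) = - coeff cap_instance v"
  proof (cases "v \<in> word ` perms")
    case True
    then obtain \<pi> where "\<pi> \<in> perms" "v = word \<pi>" by blast
    then show ?thesis
      using \<tau>_perms sign_\<tau> map_t by (simp add: coeff_cap_instance_word)
  next
    case False
    have "map ?t v \<notin> word ` perms"
    proof
      assume "map ?t v \<in> word ` perms"
      then obtain \<pi> where "\<pi> \<in> perms" "map ?t v = word \<pi>" by blast
      then have "v = word (?\<tau> \<circ> \<pi>)"
        using map_t by (metis map_map comp_def transpose_involutory map_idI)
      then show False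
        using False \<tau>_perms \<open>\<pi> \<in> perms\<close> by blast
    qed
    then show ?thesis
      using False by (simp add: coeff_cap_instance_eq_0)
  qed
qed

lemma alternating_on_minus_cap_instance:
  fixes g :: "'a::comm_ring_1 fpoly"
  assumes "alternating_on (set F) (coeff g)"
  shows "alternating_on (set F) (coeff (g - fmul (fconst c) cap_instance))"
proof -
  have "alternating_on (set F) (coeff (cap_instance :: 'a fpoly))"
    by (rule alternating_on_cap_instance)
  then show ?thesis
    using assms by (simp add: alternating_on_def lookup_minus coeff_fmul_fconst algebra_simps)
qed

text \<open>All words of \<open>cap_instance\<close> lie in the orbit \<open>word ` perms\<close>, on which an alternating \<open>g\<close> is
  determined by its coefficient at \<open>word id\<close>.\<close>
lemma support_minus_cap_instance:
  assumes "alternating_on (set F) (coeff g)"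
  shows "support (g - fmul (fconst (coeff g (word id))) cap_instance) \<subseteq> support g - {word id}"
proof
  let ?h = "g - fmul (fconst (coeff g (word id))) cap_instance"
  have coeff_h: "coeff ?h v = coeff g v - coeff g (word id) * coeff cap_instance v" for v
    by (simp add: lookup_minus coeff_fmul_fconst)
  fix v assume v: "v \<in> support ?h"
  have "v \<notin> word ` perms"
  proof
    assume "v \<in> word ` perms"
    then obtain \<pi> where \<pi>: "\<pi> permutes {..<length F}" "v = word \<pi>" by blast
    then have "coeff g v = of_int (sign \<pi>) * coeff g (word id)"
      using alternating_on_word[OF assms \<pi>(1)] by simp
    then have "coeff ?h v = 0"
      using \<pi> by (simp add: coeff_h coeff_cap_instance_word)
    then show False
      using v by (simp add: in_keys_iff)
  qed
  then have "coeff ?h v = coeff g v"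
    by (simp add: coeff_h coeff_cap_instance_eq_0)
  moreover have "v \<noteq> word id"
    using \<open>v \<notin> word ` perms\<close> permutes_id by blast
  ultimately show "v \<in> support g - {word id}"
    using v by (simp add: in_keys_iff)
qed

end

lemma interleaving_decomposition:
  assumes "\<And>z. z \<in> Z \<Longrightarrow> count_list w z = 1"
  obtains w0 F us where "interleaving w0 F us" "set F = Z" "w = w0 @ interleave F us id"
proof -
  define F where "F = filter (\<lambda>x. x \<in> Z) w"
  obtain w0 us where dec: "length us = length F" "w = w0 @ interleave F us id"
    "\<forall>x\<in>set w0. x \<notin> Z" "\<forall>u\<in>set us. \<forall>x\<in>set u. x \<notin> Z"
    using word_decomposition[of "\<lambda>x. x \<in> Z" w] unfolding F_def by blast
  have "Z \<subseteq> set w"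
    using assms count_notin by fastforce
  then have "set F = Z"
    by (auto simp: F_def)
  moreover have "distinct F"
    unfolding F_def by (rule distinct_filter_count_list) (simp add: assms)
  ultimately have "interleaving w0 F us"
    using dec by unfold_locales auto
  then show ?thesis
    using that \<open>set F = Z\<close> dec(2) by blast
qed

theorem alternating_multilinear_in_Tideal_Cap:
  fixes g :: "'c::comm_ring_1 fpoly"
  assumes "finite Z" "multilinear_on Z g" "alternating_on Z (coeff g)"
  shows "g \<in> Tideal {Cap (card Z)}"
  using assms(2,3)
proof (induction "card (support g)" arbitrary: g rule: less_induct)
  case less
  show ?case
  proof (cases "support g = {}")
    case True
    then show ?thesis by (simp add: Tideal.zero)
  next
    case False
    then obtain w where w: "w \<in> support g" by blast
    then obtain w0 F us where "interleaving w0 F us" "set F = Z" and w_eq: "w = w0 @ interleave F us id"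
      using interleaving_decomposition[of Z w] less.prems(1) by (auto simp: multilinear_on_def)
    then interpret interleaving w0 F us
      by simp
    have card_Z: "card Z = length F"
      using \<open>set F = Z\<close> distinct_F distinct_card by blast
    define h where "h = g - fmul (fconst (coeff g w)) cap_instance"
    have "support h \<subseteq> support g - {w}"
      using support_minus_cap_instance less.prems(2) \<open>set F = Z\<close> by (simp add: h_def w_eq word_def)
    then have "card (support h) < card (support g)"
      using w by (intro psubset_card_mono) auto
    moreover have "multilinear_on Z h"
      using less.prems(1) \<open>support h \<subseteq> support g - {w}\<close> by (auto simp: multilinear_on_def)
    moreover have "alternating_on Z (coeff h)"
      using alternating_on_minus_cap_instance less.prems(2) \<open>set F = Z\<close> by (simp add: h_def)
    ultimately have "h \<in> Tideal {Cap (card Z)}"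
      using less.hyps by blast
    then have "h + fmul (fconst (coeff g w)) cap_instance \<in> Tideal {Cap (card Z)}"
      using cap_instance_in_Tideal card_Z by (auto intro: Tideal.add Tideal.lmul)
    then show ?thesis by (simp add: h_def)
  qed
qed


lemma of_int_sign_square: "of_int (sign p) * of_int (sign p) = (1::'a::ring_1)"
  by (simp flip: of_int_mult)

lemma involution_permutes:
  assumes "\<And>z. p (p z) = z" "\<And>z. z \<notin> A \<Longrightarrow> p z = z"
  shows "p permutes A"
  using assms involuntory_imp_bij[of p] by (auto simp: permutes_def bij_iff)

lemma alternating_on_Un_permutes:
  assumes alt: "alternating_on X c" "alternating_on Y c"
    and fin: "finite X" "finite Y" and disj: "X \<inter> Y = {}"
    and p: "p permutes X \<union> Y" "p ` X = X"
  shows "c (map p v) = of_int (sign p) * c v"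
proof -
  have "p ` Y \<inter> X = {}"
    using disj p(2) permutes_inj[OF p(1)] by (metis image_Int image_empty Int_commute)
  moreover have "X \<union> p ` Y = X \<union> Y"
    using permutes_image[OF p(1)] p(2) by (simp add: image_Un)
  ultimately have pY: "p ` Y = Y"
    using disj by blast
  have pX_perm: "restrict_id p X permutes X" and pY_perm: "restrict_id p Y permutes Y"
    using p(2) pY permutes_inj_on[OF p(1)]
    by (auto intro!: permutes_restrict_id simp: bij_betw_def)
  have split: "p = restrict_id p X \<circ> restrict_id p Y"
  proof
    fix z
    show "p z = (restrict_id p X \<circ> restrict_id p Y) z"
      using pY disj permutes_not_in[OF p(1), of z] imageI[of z Y p]
      by (cases "z \<in> Y"; cases "z \<in> X") (auto simp: restrict_id_def)
  qed
  have "c (map p v) = c (map (restrict_id p X) (map (restrict_id p Y) v))"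
    by (metis split map_map)
  also have "\<dots> = of_int (sign (restrict_id p X)) * (of_int (sign (restrict_id p Y)) * c v)"
    by (simp only: alternating_on_permutes[OF alt(1) fin(1) pX_perm]
        alternating_on_permutes[OF alt(2) fin(2) pY_perm])
  also have "\<dots> = of_int (sign p) * c v"
  proof -
    have "sign (restrict_id p X \<circ> restrict_id p Y) = sign (restrict_id p X) * sign (restrict_id p Y)"
      using permutes_imp_permutation[OF fin(1) pX_perm] permutes_imp_permutation[OF fin(2) pY_perm]
      by (rule sign_compose)
    then show ?thesis
      by (metis split mult.assoc of_int_mult)
  qed
  finally show ?thesis .
qed

lemma exists_involution_image:
  assumes "finite X" "finite S" "card S = card X"
  obtains p where "p permutes X \<union> S" "\<And>z. p (p z) = z" "p ` X = S"
proof -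
  have "card (X - S) = card (S - X)"
    using assms by (simp add: card_Diff_subset_Int Int_commute)
  then obtain b where b: "bij_betw b (X - S) (S - X)"
    using finite_same_card_bij assms by blast
  define q where "q = inv_into (X - S) b"
  have q: "bij_betw q (S - X) (X - S)"
    unfolding q_def by (rule bij_betw_inv_into[OF b])
  define p where "p z = (if z \<in> X - S then b z else if z \<in> S - X then q z else z)" for z
  have inv: "p (p z) = z" for z
    using b q bij_betwE[OF b] bij_betwE[OF q]
    by (auto simp: p_def q_def bij_betw_inv_into_left bij_betw_inv_into_right)
  moreover have "p permutes X \<union> S"
    by (rule involution_permutes[OF inv]) (auto simp: p_def)
  moreover have "p ` X = S"
  proof -
    have "p ` X = (X \<inter> S) \<union> b ` (X - S)"
      by (auto simp: p_def image_iff)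
    then show ?thesis
      using b by (auto simp: bij_betw_def)
  qed
  ultimately show ?thesis using that by blast
qed


lemma swap_xy_moves_only_listed:
  assumes "length xs = length ys" "swap_xy xs ys v \<noteq> v"
  shows "v \<in> set xs \<union> set ys" "swap_xy xs ys v \<in> set xs \<union> set ys"
proof -
  obtain u where u: "map_of (zip xs ys @ zip ys xs) v = Some u" "swap_xy xs ys v = u"
    using assms(2) by (auto simp: swap_xy_def simp del: map_of_append split: option.splits)
  then have "(v, u) \<in> set (zip xs ys @ zip ys xs)"
    by (intro map_of_SomeD)
  then show "v \<in> set xs \<union> set ys" "swap_xy xs ys v \<in> set xs \<union> set ys"
    using u(2) by (auto dest: set_zip_leftD set_zip_rightD)
qed

lemma swap_xy_Cons:
  assumes "length xs = length ys" "distinct ((x # xs) @ (y # ys))"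
  shows "swap_xy (x # xs) (y # ys) = Transposition.transpose x y \<circ> swap_xy xs ys"
proof
  fix v
  have xy: "x \<notin> set xs \<union> set ys" "y \<notin> set xs \<union> set ys" "x \<noteq> y"
    using assms(2) by auto
  have map_of_skip: "map_of (A @ (y, x) # B) v = map_of (A @ B) v"
    if "v \<noteq> y" for A B :: "(nat \<times> nat) list"
    using that by (induction A) auto
  have fixed: "swap_xy xs ys x = x" "swap_xy xs ys y = y"
    using swap_xy_moves_only_listed[OF assms(1)] xy by blast+
  consider "v = x" | "v = y" | "v \<noteq> x" "v \<noteq> y" by blast
  then show "swap_xy (x # xs) (y # ys) v = (Transposition.transpose x y \<circ> swap_xy xs ys) v"
  proof cases
    case 1
    have "swap_xy (x # xs) (y # ys) x = y"
      by (simp add: swap_xy_def)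
    then show ?thesis
      using 1 fixed by simp
  next
    case 2
    have "map_of (zip xs ys) y = None"
      using xy assms(1) by simp
    then have "swap_xy (x # xs) (y # ys) y = x"
      using xy by (simp add: swap_xy_def map_add_def)
    then show ?thesis
      using 2 fixed by simp
  next
    case 3
    then have "swap_xy (x # xs) (y # ys) v = swap_xy xs ys v"
      by (simp add: swap_xy_def map_of_skip del: map_of_append)
    moreover have "swap_xy xs ys v \<noteq> x" "swap_xy xs ys v \<noteq> y"
      using 3 xy swap_xy_moves_only_listed[OF assms(1), of v] by auto
    ultimately show ?thesis
      by simp
  qed
qed

lemma swap_xy_exchange:
  assumes "length xs = length ys" "distinct (xs @ ys)"
  shows "swap_xy xs ys permutes set xs \<union> set ys \<and> (\<forall>z. swap_xy xs ys (swap_xy xs ys z) = z) \<and>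
    swap_xy xs ys ` set xs = set ys \<and> sign (swap_xy xs ys) = (-1) ^ length xs"
  using assms
proof (induction xs ys rule: list_induct2)
  case Nil
  have "swap_xy [] [] = id"
    by (simp add: fun_eq_iff swap_xy_def)
  then show ?case by (simp add: permutes_id id_def)
next
  case (Cons x xs y ys)
  define w where "w = swap_xy xs ys"
  define A where "A = set (x # xs) \<union> set (y # ys)"
  have xy: "x \<notin> set xs \<union> set ys" "y \<notin> set xs \<union> set ys" "x \<noteq> y"
    using Cons.prems by auto
  have IH: "w permutes set xs \<union> set ys" "\<And>z. w (w z) = z" "w ` set xs = set ys" "sign w = (-1) ^ length xs"
    using Cons.IH Cons.prems by (auto simp: w_def)
  have w_xy: "w x = x" "w y = y"
    using xy permutes_not_in[OF IH(1)] by auto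
  have "w z \<noteq> x" "w z \<noteq> y" if "z \<noteq> x" "z \<noteq> y" for z
    using that w_xy IH(2) by metis+
  then have "(Transposition.transpose x y \<circ> w) ((Transposition.transpose x y \<circ> w) z) = z" for z
    using w_xy IH(2) by (cases "z = x \<or> z = y") (auto simp: Transposition.transpose_def)
  moreover have "Transposition.transpose x y \<circ> w permutes A"
    using permutes_subset[OF IH(1), of A] by (intro permutes_compose permutes_swap_id) (auto simp: A_def)
  moreover have "(Transposition.transpose x y \<circ> w) ` set (x # xs) = set (y # ys)"
    using IH(3) w_xy xy by (auto simp: image_comp[symmetric] Transposition.transpose_def image_iff)
  moreover have "sign (Transposition.transpose x y \<circ> w) = (-1) ^ length (x # xs)"
    using IH(4) xy permutes_imp_permutation[OF _ IH(1)]
    by (simp add: sign_compose permutation_swap_id sign_swap_id)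
  ultimately show ?case
    unfolding swap_xy_Cons[OF Cons.hyps Cons.prems] w_def[symmetric] A_def[symmetric] by blast
qed


section \<open>Alternating a doubly alternating polynomial over further variables\<close>

locale doubly_alternating_exchange =
  fixes X Y :: "nat set" and \<omega> :: "nat \<Rightarrow> nat" and f :: "'c::comm_ring_1 fpoly"
  assumes finite_X: "finite X" and disjoint: "X \<inter> Y = {}"
    and multilinear: "multilinear_on (X \<union> Y) f"
    and alternating_X: "alternating_on X (coeff f)" and alternating_Y: "alternating_on Y (coeff f)"
    and \<omega>_permutes: "\<omega> permutes X \<union> Y" and \<omega>_involution: "\<And>z. \<omega> (\<omega> z) = z"
    and \<omega>_image: "\<omega> ` X = Y" and sign_\<omega>: "sign \<omega> = (-1) ^ card X"
begin

lemma finite_Y: "finite Y"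
  using \<omega>_image finite_X finite_imageI by blast

lemma card_Y: "card Y = card X"
  using \<omega>_image permutes_inj_on[OF \<omega>_permutes] card_image by metis

lemma coeff_map_permutes:
  "p permutes X \<union> Y \<Longrightarrow> p ` X = X \<Longrightarrow> coeff f (map p v) = of_int (sign p) * coeff f v"
  by (rule alternating_on_Un_permutes[OF alternating_X alternating_Y finite_X finite_Y disjoint])

abbreviation images_of_X :: "nat set \<Rightarrow> nat set set" where
  "images_of_X A \<equiv> {S. S \<subseteq> A \<and> card S = card X}"

definition exch :: "nat set \<Rightarrow> nat \<Rightarrow> nat" where
  "exch S = (SOME p. p permutes X \<union> Y \<and> (\<forall>z. p (p z) = z) \<and> p ` X = S)"

lemma exch_spec:
  assumes "S \<in> images_of_X (X \<union> Y)"
  shows "exch S permutes X \<union> Y" "exch S (exch S z) = z" "exch S ` X = S" "exch S ` S = X"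
proof -
  have "finite S"
    using assms finite_X finite_Y finite_subset by auto
  then obtain p where "p permutes X \<union> S" "\<And>z. p (p z) = z" "p ` X = S"
    using exists_involution_image[OF finite_X] assms by auto
  then have "\<exists>p. p permutes X \<union> Y \<and> (\<forall>z. p (p z) = z) \<and> p ` X = S"
    using assms permutes_subset[of p "X \<union> S" "X \<union> Y"] by auto
  then have ex: "exch S permutes X \<union> Y \<and> (\<forall>z. exch S (exch S z) = z) \<and> exch S ` X = S"
    unfolding exch_def by (rule someI_ex)
  then show "exch S permutes X \<union> Y" "exch S (exch S z) = z" "exch S ` X = S"
    by auto
  from ex have "\<And>z. exch S (exch S z) = z"
    by blast
  then have "exch S ` exch S ` X = X"
    by (simp add: image_image)
  then show "exch S ` S = X"
    unfolding ex[THEN conjunct2, THEN conjunct2] .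
qed

definition signed_coeff :: "nat set \<Rightarrow> nat list \<Rightarrow> 'c" where
  "signed_coeff S v = of_int (sign (exch S)) * coeff f (map (exch S) v)"

lemma signed_coeff_X: "signed_coeff X v = coeff f v"
proof -
  have X: "X \<in> images_of_X (X \<union> Y)" by simp
  then show ?thesis
    using coeff_map_permutes[OF exch_spec(1,3)[OF X]]
    by (simp add: signed_coeff_def of_int_sign_square flip: mult.assoc)
qed

lemma signed_coeff_permutes:
  assumes S: "S \<in> images_of_X (X \<union> Y)" and \<pi>: "\<pi> permutes X \<union> Y"
  shows "signed_coeff (\<pi> ` S) (map \<pi> v) = of_int (sign \<pi>) * signed_coeff S v"
proof -
  have \<pi>S: "\<pi> ` S \<in> images_of_X (X \<union> Y)"
    using S permutes_image[OF \<pi>] permutes_inj_on[OF \<pi>] by (auto simp: card_image)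
  define h where "h = exch (\<pi> ` S) \<circ> \<pi> \<circ> exch S"
  have h_perm: "h permutes X \<union> Y"
    unfolding h_def by (intro permutes_compose exch_spec(1) S \<pi>S \<pi>)
  have h_X: "h ` X = X"
    by (simp only: h_def image_comp[symmetric] exch_spec(3)[OF S] exch_spec(4)[OF \<pi>S])
  have sign_h: "sign h = sign (exch (\<pi> ` S)) * sign \<pi> * sign (exch S)"
    using permutes_imp_permutation[OF _ exch_spec(1)] permutes_imp_permutation[OF _ \<pi>] S \<pi>S finite_X finite_Y
    by (simp add: h_def sign_compose permutation_compose)
  have "map (exch (\<pi> ` S)) (map \<pi> v) = map h (map (exch S) v)"
    by (simp add: h_def exch_spec(2)[OF S])
  then have "coeff f (map (exch (\<pi> ` S)) (map \<pi> v)) = of_int (sign h) * coeff f (map (exch S) v)"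
    by (simp only: coeff_map_permutes[OF h_perm h_X])
  then have "signed_coeff (\<pi> ` S) (map \<pi> v) =
      of_int (sign (exch (\<pi> ` S))) * (of_int (sign h) * coeff f (map (exch S) v))"
    by (simp only: signed_coeff_def)
  also have "\<dots> = (of_int (sign (exch (\<pi> ` S))) * of_int (sign (exch (\<pi> ` S)))) *
      (of_int (sign \<pi>) * signed_coeff S v)"
    by (simp add: sign_h signed_coeff_def ac_simps)
  finally show ?thesis
    by (simp add: of_int_sign_square)
qed

lemma signed_coeff_Y: "signed_coeff Y v = of_int (sign \<omega>) * coeff f (map \<omega> v)"
proof -
  have "map \<omega> (map \<omega> v) = v"
    by (simp add: comp_def \<omega>_involution)
  then show ?thesis
    using signed_coeff_permutes[OF _ \<omega>_permutes, of X "map \<omega> v"]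
    by (simp only: \<omega>_image signed_coeff_X) simp
qed

definition alternation :: "nat set \<Rightarrow> 'c fpoly" where
  "alternation T = (\<Sum>S\<in>images_of_X (X \<union> T). fmul (fconst (of_int (sign (exch S)))) (frename (exch S) f))"

lemma finite_images_of_X: "finite A \<Longrightarrow> finite (images_of_X A)"
  by (rule finite_subset[of _ "Pow A"]) auto

lemma coeff_alternation:
  assumes "T \<subseteq> Y"
  shows "coeff (alternation T) v = (\<Sum>S\<in>images_of_X (X \<union> T). signed_coeff S v)"
  unfolding alternation_def lookup_sum
proof (rule sum.cong[OF refl])
  fix S assume "S \<in> images_of_X (X \<union> T)"
  then have "S \<in> images_of_X (X \<union> Y)"
    using assms by auto
  then show "coeff (fmul (fconst (of_int (sign (exch S)))) (frename (exch S) f)) v = signed_coeff S v"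
    by (simp add: signed_coeff_def coeff_fmul_fconst coeff_frename_involution[OF exch_spec(2)])
qed

lemma coeff_alternation_permutes:
  assumes T: "T \<subseteq> Y" and \<pi>: "\<pi> permutes X \<union> T"
  shows "coeff (alternation T) (map \<pi> v) = of_int (sign \<pi>) * coeff (alternation T) v"
proof -
  have image_mem: "p ` S \<in> images_of_X (X \<union> T)" if "p permutes X \<union> T" "S \<in> images_of_X (X \<union> T)" for p S
    using that permutes_image[OF that(1)] permutes_inj_on[OF that(1)] by (auto simp: card_image)
  have S_mem: "S \<in> images_of_X (X \<union> Y)" if "S \<in> images_of_X (X \<union> T)" for S
    using that T by auto
  have "coeff (alternation T) (map \<pi> v) = (\<Sum>S\<in>images_of_X (X \<union> T). signed_coeff S (map \<pi> v))"
    by (rule coeff_alternation[OF T])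
  also have "\<dots> = (\<Sum>S\<in>images_of_X (X \<union> T). signed_coeff (\<pi> ` S) (map \<pi> v))"
  proof (rule sum.reindex_bij_witness[where i = "image \<pi>" and j = "image (inv \<pi>)"])
    fix S assume S: "S \<in> images_of_X (X \<union> T)"
    show "\<pi> ` inv \<pi> ` S = S" "inv \<pi> ` \<pi> ` S = S"
      using permutes_inverses[OF \<pi>] by (simp_all add: image_image)
    then show "signed_coeff (\<pi> ` inv \<pi> ` S) (map \<pi> v) = signed_coeff S (map \<pi> v)"
      by simp
    show "inv \<pi> ` S \<in> images_of_X (X \<union> T)" "\<pi> ` S \<in> images_of_X (X \<union> T)"
      using image_mem[OF permutes_inv[OF \<pi>] S] image_mem[OF \<pi> S] .
  qed
  also have "\<dots> = (\<Sum>S\<in>images_of_X (X \<union> T). of_int (sign \<pi>) * signed_coeff S v)"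
    using permutes_subset[OF \<pi>, of "X \<union> Y"] T
    by (intro sum.cong refl signed_coeff_permutes S_mem) auto
  also have "\<dots> = of_int (sign \<pi>) * coeff (alternation T) v"
    by (simp add: coeff_alternation[OF T] sum_distrib_left)
  finally show ?thesis .
qed

lemma alternating_on_alternation: "T \<subseteq> Y \<Longrightarrow> alternating_on (X \<union> T) (coeff (alternation T))"
  by (simp add: alternating_on_def coeff_alternation_permutes permutes_swap_id sign_swap_id)

lemma multilinear_on_alternation:
  assumes "T \<subseteq> Y"
  shows "multilinear_on (X \<union> Y) (alternation T)"
  unfolding multilinear_on_def
proof (intro ballI)
  fix v z assume v: "v \<in> support (alternation T)" and z: "z \<in> X \<union> Y"
  obtain S where S: "S \<in> images_of_X (X \<union> T)" "signed_coeff S v \<noteq> 0"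
    using v by (auto simp: in_keys_iff coeff_alternation[OF assms] intro: sum.not_neutral_contains_not_neutral)
  then have S': "S \<in> images_of_X (X \<union> Y)"
    using assms by auto
  have "map (exch S) v \<in> support f"
    using S(2) by (auto simp: signed_coeff_def in_keys_iff)
  moreover have "exch S z \<in> X \<union> Y"
    using permutes_in_image[OF exch_spec(1)[OF S']] z by blast
  ultimately have "count_list (map (exch S) v) (exch S z) = 1"
    using multilinear by (simp add: multilinear_on_def)
  then show "count_list v z = 1"
    by (simp add: count_list_map_conv permutes_inj[OF exch_spec(1)[OF S']])
qed

lemma alternation_in_CAP:
  assumes "T \<subseteq> Y" "T \<noteq> {}"
  shows "alternation T \<in> CAP (Suc (card X))"
proof -
  obtain t where t: "t \<in> T"
    using assms(2) by blast
  then have "t \<notin> X"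
    using assms(1) disjoint by blast
  then have "card (insert t X) = Suc (card X)"
    using finite_X by simp
  moreover have "insert t X \<subseteq> X \<union> T" "insert t X \<subseteq> X \<union> Y"
    using t assms(1) by auto
  ultimately show ?thesis
    using alternating_multilinear_in_Tideal_Cap[of "insert t X" "alternation T"]
      alternating_on_subset[OF alternating_on_alternation[OF assms(1)]]
      multilinear_on_subset[OF multilinear_on_alternation[OF assms(1)]] finite_X
    by (simp add: CAP_def)
qed

lemma coeff_alternation_empty: "coeff (alternation {}) v = coeff f v"
proof -
  have "images_of_X (X \<union> {}) = {X}"
    by (auto dest: card_subset_eq[OF finite_X])
  then show ?thesis
    by (simp add: coeff_alternation signed_coeff_X)
qed

lemma coeff_alternation_grouped:
  assumes T: "T \<subseteq> Y"
  shows "coeff (alternation T) v =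
    (\<Sum>B\<in>Pow T. \<Sum>S | S \<in> images_of_X (X \<union> Y) \<and> S \<inter> Y = B. signed_coeff S v)"
proof -
  have "finite T"
    using T finite_Y finite_subset by blast
  then have "coeff (alternation T) v =
      (\<Sum>B\<in>Pow T. \<Sum>S | S \<in> images_of_X (X \<union> T) \<and> S \<inter> Y = B. signed_coeff S v)"
    unfolding coeff_alternation[OF T]
    by (intro sum.group[symmetric] finite_images_of_X) (use disjoint in \<open>auto simp: finite_X\<close>)
  also have "\<dots> = (\<Sum>B\<in>Pow T. \<Sum>S | S \<in> images_of_X (X \<union> Y) \<and> S \<inter> Y = B. signed_coeff S v)"
    using T disjoint by (intro sum.cong refl arg_cong[where f = "\<lambda>A. sum _ A"]) auto
  finally show ?thesis .
qed

text \<open>Moebius inversion of \<open>coeff_alternation_grouped\<close> over \<open>Pow Y\<close>; only \<open>S = Y\<close> has \<open>S \<inter> Y = Y\<close>.\<close>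
lemma sum_alternation:
  "(\<Sum>T\<in>Pow Y. (-1) ^ card T * coeff (alternation T) v) = coeff f (map \<omega> v)"
proof -
  define h where "h B = (\<Sum>S | S \<in> images_of_X (X \<union> Y) \<and> S \<inter> Y = B. signed_coeff S v)" for B
  have "h Y = signed_coeff Y v"
  proof -
    have "S = Y" if "S \<in> images_of_X (X \<union> Y)" "S \<inter> Y = Y" for S
    proof -
      have "finite S"
        using that(1) finite_X finite_Y finite_subset by auto
      then show ?thesis
        using that card_Y card_subset_eq[of S Y] by auto
    qed
    then have "{S. S \<in> images_of_X (X \<union> Y) \<and> S \<inter> Y = Y} = {Y}"
      using card_Y by auto
    then show ?thesis by (simp add: h_def)
  qed
  have "(-1) ^ card Y * h Y = (\<Sum>T\<in>Pow Y. (-1) ^ card T * (\<Sum>B\<in>Pow T. h B))"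
    by (rule inclusion_exclusion_symmetric[where f = "\<lambda>B. (-1) ^ card B * h B"])
      (simp_all add: finite_Y flip: mult.assoc power_add)
  also have "\<dots> = (\<Sum>T\<in>Pow Y. (-1) ^ card T * coeff (alternation T) v)"
    by (intro sum.cong refl) (simp add: h_def coeff_alternation_grouped)
  finally show ?thesis
    using \<open>h Y = signed_coeff Y v\<close>
    by (simp add: signed_coeff_Y sign_\<omega> card_Y flip: mult.assoc power_add)
qed

theorem diff_frename_in_CAP: "f - frename \<omega> f \<in> CAP (Suc (card X))"
proof -
  define Q where "Q = (\<Sum>T\<in>Pow Y - {{}}. fmul (fconst ((-1) ^ Suc (card T))) (alternation T))"
  have "Q \<in> CAP (Suc (card X))"
    unfolding Q_def CAP_def
    by (intro Tideal_sum Tideal.lmul alternation_in_CAP[unfolded CAP_def]) (auto simp: finite_Y)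
  moreover have "f - frename \<omega> f = Q"
  proof (rule poly_mapping_eqI)
    fix v
    have "coeff f (map \<omega> v) = coeff f v + (\<Sum>T\<in>Pow Y - {{}}. (-1) ^ card T * coeff (alternation T) v)"
      using sum.remove[of "Pow Y" "{}" "\<lambda>T. (-1) ^ card T * coeff (alternation T) v"]
      by (simp add: finite_Y coeff_alternation_empty flip: sum_alternation)
    then show "coeff (f - frename \<omega> f) v = coeff Q v"
      by (simp add: Q_def lookup_minus lookup_sum coeff_fmul_fconst coeff_frename_involution[OF \<omega>_involution]
          sum_negf)
  qed
  ultimately show ?thesis by simp
qed

end

lemma vswap_eq_transpose: "vswap a b = Transposition.transpose a b"
  by (simp add: fun_eq_iff vswap_def Transposition.transpose_def)

lemma alternating_on_if_alternating_in:
  assumes "distinct zs" "alternating_in zs f"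
  shows "alternating_on (set zs) (coeff f)"
  unfolding alternating_on_def
proof (intro ballI impI allI)
  fix a b v assume "a \<in> set zs" "b \<in> set zs" "a \<noteq> b"
  then obtain i j where "i < length zs" "j < length zs" "i \<noteq> j" "zs ! i = a" "zs ! j = b"
    by (metis in_set_conv_nth)
  then have "frename (Transposition.transpose a b) f = - f"
    using assms(2) by (auto simp: alternating_in_def vswap_eq_transpose)
  then show "coeff f (map (Transposition.transpose a b) v) = - coeff f v"
    by (metis coeff_frename_involution transpose_involutory lookup_uminus)
qed

theorem lemma2p38:
  fixes xs ys :: "nat list" and n :: nat and f :: "'c::comm_ring_1 fpoly"
  assumes "length xs = n" and "length ys = n" and "distinct (xs @ ys)"
    and "doubly_alternating xs ys f"
  shows "f - frename (swap_xy xs ys) f \<in> CAP (Suc n)"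
proof -
  have "card (set xs) = n"
    using assms(1,3) by (simp add: distinct_card)
  interpret doubly_alternating_exchange "set xs" "set ys" "swap_xy xs ys" f
    using assms swap_xy_exchange[of xs ys] \<open>card (set xs) = n\<close>
    by unfold_locales
      (auto simp: doubly_alternating_def multilinear_on_def multilinear_in_def
        intro: alternating_on_if_alternating_in)
  show ?thesis
    using diff_frename_in_CAP \<open>card (set xs) = n\<close> by simp
qed

end
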